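(* Let $N\ge1$, let $M=\prod_{i=1}^N M_i\subset\mathbb{R}^N$ be compact (each $M_i\subset\mathbb{R}$), and suppose $M\subset U=\prod_{i=1}^N U_i\subset\mathbb{C}^N$ with each $U_i$ an open domain of $\mathbb{C}$ symmetric about the real axis. Let $f:M\to\mathbb{R}$ be continuous. Then for every $\varepsilon>0$ there exist an integer $h\ge1$ and a CauchyNet $N_{\boldsymbol\theta,h}$ of hidden width $h$, with parameters $\boldsymbol\theta=(\mathbf{B},\mathbf{c})$, $\mathbf{B}\in\mathbb{C}^{h\times N}$, $\mathbf{c}\in\mathbb{C}^h$, such that $|f(\mathbf{x})-N_{\boldsymbol\theta,h}(\mathbf{x})|<\varepsilon$ for all $\mathbf{x}=(x_1,\dots,x_N)^{\mathrm T}\in M$.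
   Context: A CauchyNet with hidden width $h$ and parameters $\mathbf{B}=(b_{k,i})\in\mathbb{C}^{h\times N}$, $\mathbf{c}=(c_1,\dots,c_h)\in\mathbb{C}^h$ is the (complex-valued) function on $M$ given by $N_{\boldsymbol\theta,h}(\mathbf{x})=\sum_{k=1}^{h}c_k\prod_{i=1}^{N}(b_{k,i}-x_i)^{-1}$, where the parameters are such that no factor $b_{k,i}-x_i$ vanishes on $M$. (In the architecture each hidden neuron computes the Cauchy activation $\prod_i z_i^{-1}$ of the complex-shifted input, and the output is the $\mathbf{c}$-weighted sum of the hidden activations.) *)

theory Defs
  imports "HOL-Analysis.Analysis"
begin

definition cauchynet :: "nat \<Rightarrow> (nat \<Rightarrow> 'n::finite \<Rightarrow> complex) \<Rightarrow> (nat \<Rightarrow> complex)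
    \<Rightarrow> real^'n \<Rightarrow> complex" where
  "cauchynet h B c x = (\<Sum>k<h. c k * (\<Prod>i\<in>UNIV. inverse (B k i - complex_of_real (x $ i))))"

definition cauchynet_admissible :: "nat \<Rightarrow> (nat \<Rightarrow> 'n::finite \<Rightarrow> complex) \<Rightarrow> (real^'n) set \<Rightarrow> bool" where
  "cauchynet_admissible h B M \<longleftrightarrow>
     (\<forall>x\<in>M. \<forall>k<h. \<forall>i. B k i - complex_of_real (x $ i) \<noteq> 0)"

end

theory Submission
  imports Defs
begin

(*
  A Cauchy atom is the product of the factors (b_i - x_i)^(-1) with all poles b_i off the real
  axis. The functions that CauchyNets with such poles approximate uniformly on M are closed under
  sums, complex scalar multiples and uniform limits. They are also closed under products: the
  partial fraction identity
    1/((a - y)(b - y)) = (1/(b - a)) (1/(a - y) - 1/(b - y))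
  writes the product of two atoms with coordinatewise distinct poles as a combination of 2^N
  atoms, and coinciding poles are avoided by moving the poles of one atom slightly along the real
  axis. The constant 1 is the limit of the atoms (i s)^N prod_i (i s - x_i)^(-1) as s grows, and
  conjugating the poles conjugates an atom, so real and imaginary parts of atoms are approximable;
  they separate the points of M. The Stone-Weierstrass theorem then applies to the real continuous
  functions on M that are approximable. Nonreal poles never meet the real set M, which makes the
  nets admissible.
*)

definition cauchy_atom :: "('n::finite \<Rightarrow> complex) \<Rightarrow> real^'n \<Rightarrow> complex" where
  "cauchy_atom b x = (\<Prod>i\<in>UNIV. inverse (b i - complex_of_real (x $ i)))"

definition nonreal_poles :: "('n \<Rightarrow> complex) \<Rightarrow> bool" where
  "nonreal_poles b \<longleftrightarrow> (\<forall>i. Im (b i) \<noteq> 0)"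

definition cauchynet_approximable :: "(real^'n::finite) set \<Rightarrow> (real^'n \<Rightarrow> complex) \<Rightarrow> bool" where
  "cauchynet_approximable M g \<longleftrightarrow> (\<forall>e>0. \<exists>h B c. (\<forall>k<h. nonreal_poles (B k)) \<and>
      (\<forall>x\<in>M. cmod (g x - cauchynet h B c x) < e))"

lemma cauchynet_eq_sum_atoms: "cauchynet h B c x = (\<Sum>k<h. c k * cauchy_atom (B k) x)"
  by (simp add: cauchynet_def cauchy_atom_def)

lemma cauchynet_extend_zero: "cauchynet (Suc h) (B(h := b)) (c(h := 0)) x = cauchynet h B c x"
  by (simp add: cauchynet_def)

lemma cauchynet_append:
  "cauchynet (h1 + h2) (\<lambda>k. if k < h1 then B1 k else B2 (k - h1))
     (\<lambda>k. if k < h1 then c1 k else c2 (k - h1)) x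
   = cauchynet h1 B1 c1 x + cauchynet h2 B2 c2 x"
  by (induction h2) (auto simp: cauchynet_def intro!: sum.cong)

lemma abs_Im_le_norm_diff_of_real: "\<bar>Im b\<bar> \<le> cmod (b - complex_of_real r)"
  using abs_Im_le_cmod[of "b - complex_of_real r"] by simp

lemma nonreal_poles_diff_nonzero:
  assumes "nonreal_poles b"
  shows "b i - complex_of_real r \<noteq> 0"
proof
  assume "b i - complex_of_real r = 0"
  then have "Im (b i - complex_of_real r) = 0" by simp
  with assms show False by (simp add: nonreal_poles_def)
qed

lemma cauchynet_admissible_if_nonreal_poles:
  "\<forall>k<h. nonreal_poles (B k) \<Longrightarrow> cauchynet_admissible h B M"
  unfolding cauchynet_admissible_def by (intro ballI allI impI nonreal_poles_diff_nonzero) simp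

lemma continuous_on_cauchy_atom: "nonreal_poles b \<Longrightarrow> continuous_on M (cauchy_atom b)"
  unfolding cauchy_atom_def
  by (intro continuous_intros) (metis nonreal_poles_diff_nonzero right_minus_eq)

lemma cauchy_atom_cnj: "cauchy_atom (\<lambda>i. cnj (b i)) x = cnj (cauchy_atom b x)"
  by (simp add: cauchy_atom_def cnj_prod)

lemma cauchynet_approximable_atom:
  assumes "nonreal_poles b"
  shows "cauchynet_approximable M (\<lambda>x. a * cauchy_atom b x)"
  unfolding cauchynet_approximable_def
proof (intro allI impI)
  fix e :: real assume "e > 0"
  then show "\<exists>h B c. (\<forall>k<h. nonreal_poles (B k)) \<and>
      (\<forall>x\<in>M. cmod (a * cauchy_atom b x - cauchynet h B c x) < e)"
    using assms by (intro exI[of _ "1::nat"] exI[of _ "\<lambda>_. b"] exI[of _ "\<lambda>_. a"] conjI)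
      (simp_all add: cauchynet_eq_sum_atoms)
qed

lemma cauchynet_approximable_zero: "cauchynet_approximable M (\<lambda>x. 0)"
  unfolding cauchynet_approximable_def
  by (auto intro!: exI[of _ "0::nat"] simp: cauchynet_def)

lemma cauchynet_approximable_add:
  assumes "cauchynet_approximable M f" "cauchynet_approximable M g"
  shows "cauchynet_approximable M (\<lambda>x. f x + g x)"
  unfolding cauchynet_approximable_def
proof (intro allI impI)
  fix e :: real assume "e > 0"
  then obtain h1 B1 c1 h2 B2 c2 where
    poles: "\<forall>k<h1. nonreal_poles (B1 k)" "\<forall>k<h2. nonreal_poles (B2 k)" and
    f: "\<forall>x\<in>M. cmod (f x - cauchynet h1 B1 c1 x) < e/2" and
    g: "\<forall>x\<in>M. cmod (g x - cauchynet h2 B2 c2 x) < e/2"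
    using assms half_gt_zero unfolding cauchynet_approximable_def by metis
  have approx: "cmod (f x + g x - (cauchynet h1 B1 c1 x + cauchynet h2 B2 c2 x)) < e"
    if "x \<in> M" for x
  proof -
    have "cmod (f x + g x - (cauchynet h1 B1 c1 x + cauchynet h2 B2 c2 x))
        \<le> cmod (f x - cauchynet h1 B1 c1 x) + cmod (g x - cauchynet h2 B2 c2 x)"
      by (metis add_diff_add norm_triangle_ineq)
    also have "\<dots> < e" using f g that by fastforce
    finally show ?thesis .
  qed
  show "\<exists>h B c. (\<forall>k<h. nonreal_poles (B k)) \<and>
      (\<forall>x\<in>M. cmod (f x + g x - cauchynet h B c x) < e)"
  proof (intro exI conjI allI impI ballI)
    fix k assume "k < h1 + h2"
    then show "nonreal_poles (if k < h1 then B1 k else B2 (k - h1))" using poles by auto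
  next
    fix x assume "x \<in> M"
    then show "cmod (f x + g x - cauchynet (h1 + h2) (\<lambda>k. if k < h1 then B1 k else B2 (k - h1))
        (\<lambda>k. if k < h1 then c1 k else c2 (k - h1)) x) < e"
      using approx by (simp only: cauchynet_append)
  qed
qed

lemma cauchynet_approximable_cmult:
  assumes "cauchynet_approximable M g"
  shows "cauchynet_approximable M (\<lambda>x. a * g x)"
  unfolding cauchynet_approximable_def
proof (intro allI impI)
  fix e :: real assume "e > 0"
  then obtain h B c where poles: "\<forall>k<h. nonreal_poles (B k)"
    and g: "\<forall>x\<in>M. cmod (g x - cauchynet h B c x) < e / (cmod a + 1)"
    using assms unfolding cauchynet_approximable_def
    by (metis add_nonneg_pos divide_pos_pos norm_ge_zero zero_less_one)
  have "cmod (a * g x - cauchynet h B (\<lambda>k. a * c k) x) < e" if "x \<in> M" for x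
  proof -
    have "cauchynet h B (\<lambda>k. a * c k) x = a * cauchynet h B c x"
      by (simp add: cauchynet_def sum_distrib_left mult.assoc)
    then have "cmod (a * g x - cauchynet h B (\<lambda>k. a * c k) x)
        = cmod a * cmod (g x - cauchynet h B c x)"
      by (metis norm_mult right_diff_distrib)
    also have "\<dots> \<le> (cmod a + 1) * cmod (g x - cauchynet h B c x)"
      by (simp add: mult_right_mono)
    also have "\<dots> < e"
      using g that pos_less_divide_eq[of "cmod a + 1"] by (simp add: add_nonneg_pos mult.commute)
    finally show ?thesis .
  qed
  then show "\<exists>h B c. (\<forall>k<h. nonreal_poles (B k)) \<and> (\<forall>x\<in>M. cmod (a * g x - cauchynet h B c x) < e)"
    using poles by blast
qed

lemma cauchynet_approximable_sum:
  assumes "\<And>j. j \<in> A \<Longrightarrow> cauchynet_approximable M (g j)"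
  shows "cauchynet_approximable M (\<lambda>x. \<Sum>j\<in>A. g j x)"
  using assms
proof (induction A rule: infinite_finite_induct)
  case (insert a A)
  then show ?case by (simp add: cauchynet_approximable_add)
qed (simp_all add: cauchynet_approximable_zero)

lemma cauchynet_approximable_uniform_limit:
  assumes "\<And>e. e > 0 \<Longrightarrow> \<exists>g'. cauchynet_approximable M g' \<and> (\<forall>x\<in>M. cmod (g x - g' x) < e)"
  shows "cauchynet_approximable M g"
  unfolding cauchynet_approximable_def
proof (intro allI impI)
  fix e :: real assume "e > 0"
  then obtain g' where g': "cauchynet_approximable M g'" "\<forall>x\<in>M. cmod (g x - g' x) < e/2"
    using assms half_gt_zero by blast
  then obtain h B c where poles: "\<forall>k<h. nonreal_poles (B k)"
    and net: "\<forall>x\<in>M. cmod (g' x - cauchynet h B c x) < e/2"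
    using \<open>e > 0\<close> unfolding cauchynet_approximable_def by (meson half_gt_zero)
  have "cmod (g x - cauchynet h B c x) < e" if "x \<in> M" for x
    using norm_triangle_ineq[of "g x - g' x" "g' x - cauchynet h B c x"] g' net that by fastforce
  then show "\<exists>h B c. (\<forall>k<h. nonreal_poles (B k)) \<and> (\<forall>x\<in>M. cmod (g x - cauchynet h B c x) < e)"
    using poles by blast
qed

lemma norm_prod_inverse_diff_le:
  fixes u v :: "'i \<Rightarrow> 'a::real_normed_field"
  assumes m_pos: "\<And>i. i \<in> I \<Longrightarrow> 0 < m i"
    and u: "\<And>i. i \<in> I \<Longrightarrow> m i \<le> norm (u i)"
    and v: "\<And>i. i \<in> I \<Longrightarrow> m i \<le> norm (v i)"
  shows "norm ((\<Prod>i\<in>I. inverse (u i)) - (\<Prod>i\<in>I. inverse (v i))) * (\<Prod>i\<in>I. m i)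
           \<le> (\<Sum>i\<in>I. norm (u i - v i) / m i)"
proof -
  define z where "z i = of_real (m i) * inverse (u i)" for i
  define w where "w i = of_real (m i) * inverse (v i)" for i
  have z: "norm (z i) \<le> 1" and w: "norm (w i) \<le> 1" if "i \<in> I" for i
    using m_pos[OF that] u[OF that] v[OF that]
    by (auto simp: z_def w_def norm_divide divide_inverse[symmetric] divide_le_eq_1)
  have zw: "norm (z i - w i) \<le> norm (u i - v i) / m i" if i: "i \<in> I" for i
  proof -
    have "u i \<noteq> 0" "v i \<noteq> 0" using m_pos[OF i] u[OF i] v[OF i] by auto
    then have "z i - w i = of_real (m i) * (v i - u i) / (u i * v i)"
      by (simp add: z_def w_def field_simps)
    then have "norm (z i - w i) = m i * norm (u i - v i) / (norm (u i) * norm (v i))"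
      using m_pos[OF i] by (simp add: norm_mult norm_divide norm_minus_commute)
    also have "\<dots> \<le> m i * norm (u i - v i) / (m i * m i)"
      using m_pos[OF i] u[OF i] v[OF i] by (intro divide_left_mono mult_mono mult_pos_pos) auto
    also have "\<dots> = norm (u i - v i) / m i" using m_pos[OF i] by simp
    finally show ?thesis .
  qed
  have "(\<Prod>i\<in>I. z i) - (\<Prod>i\<in>I. w i)
      = of_real (\<Prod>i\<in>I. m i) * ((\<Prod>i\<in>I. inverse (u i)) - (\<Prod>i\<in>I. inverse (v i)))"
    by (simp add: z_def w_def prod.distrib right_diff_distrib)
  moreover have "(\<Prod>i\<in>I. m i) \<ge> 0" using m_pos by (simp add: less_imp_le prod_nonneg)
  ultimately have "norm ((\<Prod>i\<in>I. inverse (u i)) - (\<Prod>i\<in>I. inverse (v i))) * (\<Prod>i\<in>I. m i)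
      = norm ((\<Prod>i\<in>I. z i) - (\<Prod>i\<in>I. w i))"
    by (simp add: norm_mult flip: of_real_prod)
  also have "\<dots> \<le> (\<Sum>i\<in>I. norm (z i - w i))"
    using z w by (rule norm_prod_diff)
  also have "\<dots> \<le> (\<Sum>i\<in>I. norm (u i - v i) / m i)"
    using zw by (rule sum_mono)
  finally show ?thesis .
qed

lemma inverse_mult_inverse_eq_partial_fractions:
  fixes a b y :: "'a::field"
  assumes "a \<noteq> y" "b \<noteq> y" "a \<noteq> b"
  shows "inverse (a - y) * inverse (b - y) = inverse (b - a) * (inverse (a - y) - inverse (b - y))"
  using assms by (simp add: field_simps)

lemma norm_cauchy_atom_le:
  assumes "nonreal_poles b"
  shows "cmod (cauchy_atom b x) \<le> (\<Prod>i\<in>UNIV. 1 / \<bar>Im (b i)\<bar>)"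
  unfolding cauchy_atom_def prod_norm[symmetric]
proof (rule prod_mono)
  fix i
  have "0 < \<bar>Im (b i)\<bar>" using assms by (simp add: nonreal_poles_def)
  then show "0 \<le> cmod (inverse (b i - complex_of_real (x $ i))) \<and>
      cmod (inverse (b i - complex_of_real (x $ i))) \<le> 1 / \<bar>Im (b i)\<bar>"
    using abs_Im_le_norm_diff_of_real[of "b i" "x $ i"]
    by (simp add: norm_inverse le_imp_inverse_le divide_inverse)
qed

lemma norm_cauchy_atom_shift_le:
  assumes "nonreal_poles b"
  shows "cmod (cauchy_atom b x - cauchy_atom (\<lambda>i. b i + of_real s) x)
     \<le> \<bar>s\<bar> * (\<Sum>i\<in>UNIV. 1 / \<bar>Im (b i)\<bar>) / (\<Prod>i\<in>UNIV. \<bar>Im (b i)\<bar>)"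
proof -
  have Im_pos: "0 < \<bar>Im (b i)\<bar>" for i using assms by (simp add: nonreal_poles_def)
  have "cmod (cauchy_atom b x - cauchy_atom (\<lambda>i. b i + of_real s) x) * (\<Prod>i\<in>UNIV. \<bar>Im (b i)\<bar>)
      \<le> (\<Sum>i\<in>UNIV.
            cmod ((b i - of_real (x $ i)) - (b i + of_real s - of_real (x $ i))) / \<bar>Im (b i)\<bar>)"
    unfolding cauchy_atom_def
  proof (rule norm_prod_inverse_diff_le)
    fix i
    show "0 < \<bar>Im (b i)\<bar>" by (rule Im_pos)
    show "\<bar>Im (b i)\<bar> \<le> cmod (b i - of_real (x $ i))"
      by (rule abs_Im_le_norm_diff_of_real)
    show "\<bar>Im (b i)\<bar> \<le> cmod (b i + of_real s - of_real (x $ i))"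
      using abs_Im_le_norm_diff_of_real[of "b i + of_real s" "x $ i"] by simp
  qed
  moreover have "0 < (\<Prod>i\<in>UNIV. \<bar>Im (b i)\<bar>)" using Im_pos by (simp add: prod_pos)
  ultimately show ?thesis by (simp add: sum_distrib_left pos_le_divide_eq)
qed

lemma cauchy_atom_mult_partial_fractions:
  fixes b b' :: "'n::finite \<Rightarrow> complex"
  assumes "nonreal_poles b" "nonreal_poles b'" "\<And>i. b i \<noteq> b' i"
  shows "cauchy_atom b x * cauchy_atom b' x =
    (\<Sum>X\<in>Pow UNIV. ((\<Prod>i\<in>X. inverse (b' i - b i)) * (\<Prod>i\<in>-X. - inverse (b' i - b i))) *
       cauchy_atom (\<lambda>i. if i \<in> X then b i else b' i) x)"
proof -
  define d where "d i = inverse (b' i - b i)" for i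
  define u where "u i = inverse (b i - complex_of_real (x $ i))" for i
  define v where "v i = inverse (b' i - complex_of_real (x $ i))" for i
  have "cauchy_atom b x * cauchy_atom b' x = (\<Prod>i\<in>UNIV. d i * u i + (- d i) * v i)"
    unfolding cauchy_atom_def prod.distrib[symmetric]
  proof (rule prod.cong)
    fix i
    show "inverse (b i - of_real (x $ i)) * inverse (b' i - of_real (x $ i))
        = d i * u i + - d i * v i"
      using inverse_mult_inverse_eq_partial_fractions[of "b i" "of_real (x $ i)" "b' i"]
        nonreal_poles_diff_nonzero[OF assms(1), of i "x $ i"]
        nonreal_poles_diff_nonzero[OF assms(2), of i "x $ i"] assms(3)[of i]
      by (simp add: d_def u_def v_def algebra_simps)
  qed simp
  also have "\<dots> = (\<Sum>X\<in>Pow UNIV. (\<Prod>i\<in>X. d i * u i) * (\<Prod>i\<in>UNIV - X. (- d i) * v i))"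
    by (rule prod_add) simp
  also have "\<dots> = (\<Sum>X\<in>Pow UNIV. ((\<Prod>i\<in>X. d i) * (\<Prod>i\<in>-X. - d i)) *
       cauchy_atom (\<lambda>i. if i \<in> X then b i else b' i) x)"
  proof (rule sum.cong[OF refl])
    fix X :: "'n set"
    have "cauchy_atom (\<lambda>i. if i \<in> X then b i else b' i) x = (\<Prod>i\<in>X. u i) * (\<Prod>i\<in>-X. v i)"
      unfolding cauchy_atom_def Compl_eq_Diff_UNIV
      by (subst prod.subset_diff[of X])
        (auto simp: u_def v_def mult.commute intro!: prod.cong arg_cong2[where f="(*)"])
    then show "(\<Prod>i\<in>X. d i * u i) * (\<Prod>i\<in>UNIV - X. (- d i) * v i) =
        ((\<Prod>i\<in>X. d i) * (\<Prod>i\<in>-X. - d i)) * cauchy_atom (\<lambda>i. if i \<in> X then b i else b' i) x"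
      by (simp only: prod.distrib Compl_eq_Diff_UNIV mult_ac)
  qed
  finally show ?thesis by (simp add: d_def)
qed

lemma cauchynet_approximable_atom_mult_distinct:
  assumes "nonreal_poles b" "nonreal_poles b'" "\<And>i. b i \<noteq> b' i"
  shows "cauchynet_approximable M (\<lambda>x. cauchy_atom b x * cauchy_atom b' x)"
  unfolding cauchy_atom_mult_partial_fractions[OF assms]
  using assms(1,2) by (intro cauchynet_approximable_sum cauchynet_approximable_atom)
    (auto simp: nonreal_poles_def)

lemma cauchy_atom_shift_uniformly_small:
  assumes b: "nonreal_poles b" and "\<delta> > 0"
  obtains s0 where "s0 > 0"
    and "\<And>s x. \<bar>s\<bar> < s0 \<Longrightarrow> cmod (cauchy_atom b x - cauchy_atom (\<lambda>i. b i + of_real s) x) < \<delta>"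
proof
  define S where "S = (\<Sum>i\<in>UNIV. 1 / \<bar>Im (b i)\<bar>)"
  define P where "P = (\<Prod>i\<in>UNIV. \<bar>Im (b i)\<bar>)"
  have "S \<ge> 0" by (simp add: S_def sum_nonneg)
  have "P > 0" using b by (simp add: P_def nonreal_poles_def prod_pos)
  show "\<delta> * P / (S + 1) > 0" using \<open>\<delta> > 0\<close> \<open>P > 0\<close> \<open>S \<ge> 0\<close> by simp
  fix s x assume s: "\<bar>s\<bar> < \<delta> * P / (S + 1)"
  have "cmod (cauchy_atom b x - cauchy_atom (\<lambda>i. b i + of_real s) x) \<le> \<bar>s\<bar> * S / P"
    using norm_cauchy_atom_shift_le[OF b] by (simp add: S_def P_def)
  also have "\<dots> \<le> \<bar>s\<bar> * (S + 1) / P"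
    using \<open>P > 0\<close> by (intro divide_right_mono mult_left_mono) auto
  also have "\<dots> < \<delta> * P / (S + 1) * (S + 1) / P"
    using s \<open>P > 0\<close> \<open>S \<ge> 0\<close> by (intro divide_strict_right_mono mult_strict_right_mono) auto
  also have "\<dots> = \<delta>"
    using \<open>P > 0\<close> \<open>S \<ge> 0\<close> by simp
  finally show "cmod (cauchy_atom b x - cauchy_atom (\<lambda>i. b i + of_real s) x) < \<delta>" .
qed

lemma cauchynet_approximable_atom_mult:
  assumes b: "nonreal_poles b" and b': "nonreal_poles b'"
  shows "cauchynet_approximable M (\<lambda>x. cauchy_atom b x * cauchy_atom b' x)"
proof (rule cauchynet_approximable_uniform_limit)
  fix e :: real assume "e > 0"
  define K where "K = (\<Prod>i\<in>UNIV. 1 / \<bar>Im (b i)\<bar>)"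
  have "K \<ge> 0" by (simp add: K_def prod_nonneg)
  then obtain s0 where "s0 > 0" and shift_small:
    "\<And>s x. \<bar>s\<bar> < s0 \<Longrightarrow> cmod (cauchy_atom b' x - cauchy_atom (\<lambda>i. b' i + of_real s) x) < e / (K + 1)"
    using cauchy_atom_shift_uniformly_small[OF b', of "e / (K + 1)"] \<open>e > 0\<close> by auto
  have "infinite ({0<..<s0} - range (\<lambda>i. Re (b i) - Re (b' i)))"
    using infinite_Ioo[OF \<open>s0 > 0\<close>] by simp
  then obtain s where "s \<in> {0<..<s0} - range (\<lambda>i. Re (b i) - Re (b' i))"
    using infinite_imp_nonempty by blast
  then have s: "\<bar>s\<bar> < s0" "s \<notin> range (\<lambda>i. Re (b i) - Re (b' i))" by auto
  \<comment> \<open>shifting the poles of b' by s makes them differ from those of b in every coordinate\<close>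
  define b'' where "b'' = (\<lambda>i. b' i + of_real s)"
  have b'': "nonreal_poles b''" using b' by (simp add: b''_def nonreal_poles_def)
  have distinct: "b i \<noteq> b'' i" for i
  proof
    assume "b i = b'' i"
    then have "s = Re (b i) - Re (b' i)" by (simp add: b''_def)
    then show False using s(2) by auto
  qed
  show "\<exists>g'. cauchynet_approximable M g' \<and>
      (\<forall>x\<in>M. cmod (cauchy_atom b x * cauchy_atom b' x - g' x) < e)"
  proof (intro exI conjI ballI)
    show "cauchynet_approximable M (\<lambda>x. cauchy_atom b x * cauchy_atom b'' x)"
      using b b'' distinct by (rule cauchynet_approximable_atom_mult_distinct)
  next
    fix x
    have "cmod (cauchy_atom b x * cauchy_atom b' x - cauchy_atom b x * cauchy_atom b'' x)
        = cmod (cauchy_atom b x) * cmod (cauchy_atom b' x - cauchy_atom b'' x)"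
      by (metis norm_mult right_diff_distrib)
    also have "\<dots> \<le> K * (e / (K + 1))"
      using norm_cauchy_atom_le[OF b, of x] shift_small[OF s(1), of x] \<open>K \<ge> 0\<close>
      unfolding K_def b''_def by (intro mult_mono) auto
    also have "\<dots> < e" using \<open>e > 0\<close> \<open>K \<ge> 0\<close> by (simp add: field_simps)
    finally show
      "cmod (cauchy_atom b x * cauchy_atom b' x - cauchy_atom b x * cauchy_atom b'' x) < e" .
  qed
qed

lemma cauchynet_approximable_cauchynet_mult:
  assumes "\<forall>k<h1. nonreal_poles (B1 k)" "\<forall>k<h2. nonreal_poles (B2 k)"
  shows "cauchynet_approximable M (\<lambda>x. cauchynet h1 B1 c1 x * cauchynet h2 B2 c2 x)"
proof -
  have "cauchynet h1 B1 c1 x * cauchynet h2 B2 c2 x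
      = (\<Sum>k<h1. \<Sum>l<h2. (c1 k * c2 l) * (cauchy_atom (B1 k) x * cauchy_atom (B2 l) x))" for x
    by (simp add: cauchynet_eq_sum_atoms sum_product mult_ac)
  then show ?thesis
    using assms by (auto intro!: cauchynet_approximable_sum cauchynet_approximable_cmult
        cauchynet_approximable_atom_mult)
qed

lemma cauchynet_approximable_mult:
  assumes f: "cauchynet_approximable M f" and g: "cauchynet_approximable M g"
    and "bounded (f ` M)" "bounded (g ` M)"
  shows "cauchynet_approximable M (\<lambda>x. f x * g x)"
proof (rule cauchynet_approximable_uniform_limit)
  fix e :: real assume "e > 0"
  obtain F where F: "F > 0" "\<forall>x\<in>M. cmod (f x) \<le> F" using assms(3) by (auto simp: bounded_pos)
  obtain G where G: "G > 0" "\<forall>x\<in>M. cmod (g x) \<le> G" using assms(4) by (auto simp: bounded_pos)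
  define \<delta> where "\<delta> = min 1 (e / (F + G + 2))"
  have "\<delta> > 0" "\<delta> \<le> 1" using \<open>e > 0\<close> F G by (simp_all add: \<delta>_def)
  obtain h1 B1 c1 where poles1: "\<forall>k<h1. nonreal_poles (B1 k)"
    and approx1: "\<forall>x\<in>M. cmod (f x - cauchynet h1 B1 c1 x) < \<delta>"
    using f \<open>\<delta> > 0\<close> unfolding cauchynet_approximable_def by meson
  obtain h2 B2 c2 where poles2: "\<forall>k<h2. nonreal_poles (B2 k)"
    and approx2: "\<forall>x\<in>M. cmod (g x - cauchynet h2 B2 c2 x) < \<delta>"
    using g \<open>\<delta> > 0\<close> unfolding cauchynet_approximable_def by meson
  show "\<exists>g'. cauchynet_approximable M g' \<and> (\<forall>x\<in>M. cmod (f x * g x - g' x) < e)"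
  proof (intro exI conjI ballI)
    show "cauchynet_approximable M (\<lambda>x. cauchynet h1 B1 c1 x * cauchynet h2 B2 c2 x)"
      using poles1 poles2 by (rule cauchynet_approximable_cauchynet_mult)
  next
    fix x assume x: "x \<in> M"
    let ?N1 = "cauchynet h1 B1 c1 x" and ?N2 = "cauchynet h2 B2 c2 x"
    have "cmod ?N2 \<le> cmod (g x) + cmod (g x - ?N2)"
      using norm_triangle_sub[of ?N2 "g x"] by (simp add: norm_minus_commute)
    also have "\<dots> \<le> G + 1"
      using approx2 G(2) x \<open>\<delta> \<le> 1\<close> by (smt (verit) bspec)
    finally have N2: "cmod ?N2 \<le> G + 1" .
    have "f x * g x - ?N1 * ?N2 = f x * (g x - ?N2) + ?N2 * (f x - ?N1)"
      by (simp add: algebra_simps)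
    then have "cmod (f x * g x - ?N1 * ?N2)
        \<le> cmod (f x) * cmod (g x - ?N2) + cmod ?N2 * cmod (f x - ?N1)"
      by (metis norm_mult norm_triangle_ineq)
    also have "\<dots> \<le> F * \<delta> + (G + 1) * \<delta>"
      using approx1 approx2 x F G N2 by (intro add_mono mult_mono) auto
    also have "\<dots> = (F + G + 1) * \<delta>" by (simp add: algebra_simps)
    also have "\<dots> \<le> (F + G + 1) * (e / (F + G + 2))"
      using F G by (intro mult_left_mono) (auto simp: \<delta>_def)
    also have "\<dots> < e" using \<open>e > 0\<close> F G by (simp add: field_simps)
    finally show "cmod (f x * g x - ?N1 * ?N2) < e" .
  qed
qed

lemma cauchynet_approximable_one:
  fixes M :: "(real^'n::finite) set"
  assumes "bounded M"
  shows "cauchynet_approximable M (\<lambda>x. 1)"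
proof (rule cauchynet_approximable_uniform_limit)
  fix e :: real assume "e > 0"
  obtain R where R: "R > 0" "\<forall>x\<in>M. norm x \<le> R" using assms by (auto simp: bounded_pos)
  define s where "s = real CARD('n) * R / e + 1"
  have "s > 0" using \<open>e > 0\<close> R by (simp add: s_def add_nonneg_pos)
  define b :: "'n \<Rightarrow> complex" where "b i = \<i> * of_real s" for i
  have b: "nonreal_poles b" using \<open>s > 0\<close> by (simp add: nonreal_poles_def b_def)
  have "cmod (1 - (\<Prod>i\<in>UNIV. b i) * cauchy_atom b x) < e" if "x \<in> M" for x
  proof -
    have "cmod ((\<Prod>i\<in>UNIV. inverse (b i)) - cauchy_atom b x) * (\<Prod>i\<in>(UNIV::'n set). s)
        \<le> (\<Sum>i\<in>UNIV. cmod (b i - (b i - of_real (x $ i))) / s)"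
      unfolding cauchy_atom_def
    proof (rule norm_prod_inverse_diff_le[where m="\<lambda>_. s"])
      fix i
      show "0 < s" by (rule \<open>s > 0\<close>)
      show "s \<le> cmod (b i)" using \<open>s > 0\<close> by (simp add: b_def norm_mult)
      show "s \<le> cmod (b i - of_real (x $ i))"
        using abs_Im_le_norm_diff_of_real[of "b i" "x $ i"] \<open>s > 0\<close> by (simp add: b_def)
    qed
    moreover have "cmod ((\<Prod>i\<in>UNIV. inverse (b i)) - cauchy_atom b x) * (\<Prod>i\<in>(UNIV::'n set). s)
        = cmod (1 - (\<Prod>i\<in>UNIV. b i) * cauchy_atom b x)"
    proof -
      have nonzero: "(\<Prod>i\<in>UNIV. b i) \<noteq> 0" using \<open>s > 0\<close> by (simp add: b_def)
      have "(\<Prod>i\<in>(UNIV::'n set). s) = cmod (\<Prod>i\<in>UNIV. b i)"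
        using \<open>s > 0\<close> by (simp add: b_def norm_mult norm_power)
      moreover have "(\<Prod>i\<in>UNIV. inverse (b i)) = inverse (\<Prod>i\<in>UNIV. b i)"
        using prod_inversef[of b UNIV] by (simp add: comp_def)
      ultimately show ?thesis
        using nonzero by (simp add: right_diff_distrib mult.commute flip: norm_mult)
    qed
    moreover have "(\<Sum>i\<in>UNIV. cmod (b i - (b i - of_real (x $ i))) / s) \<le> (\<Sum>i\<in>(UNIV::'n set). R / s)"
      using \<open>s > 0\<close> R that component_le_norm_cart[of x]
      by (intro sum_mono divide_right_mono) (auto intro: order_trans)
    moreover have "(\<Sum>i\<in>(UNIV::'n set). R / s) < e"
      using \<open>e > 0\<close> \<open>s > 0\<close> by (simp add: s_def field_simps)
    ultimately show ?thesis by linarith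
  qed
  then show "\<exists>g'. cauchynet_approximable M g' \<and> (\<forall>x\<in>M. cmod (1 - g' x) < e)"
    using cauchynet_approximable_atom[OF b] by blast
qed

lemma cauchynet_approximable_const: "bounded M \<Longrightarrow> cauchynet_approximable M (\<lambda>x. a)"
  using cauchynet_approximable_cmult[OF cauchynet_approximable_one, of M a] by simp

lemma cauchynet_approximable_Re_atom:
  assumes "nonreal_poles b"
  shows "cauchynet_approximable M (\<lambda>x. complex_of_real (Re (cauchy_atom b x)))"
proof -
  have "cauchynet_approximable M
      (\<lambda>x. (1/2) * cauchy_atom b x + (1/2) * cauchy_atom (\<lambda>i. cnj (b i)) x)"
    using assms by (intro cauchynet_approximable_add cauchynet_approximable_atom)
      (simp_all add: nonreal_poles_def)
  then show ?thesis
    by (simp add: cauchy_atom_cnj complex_add_cnj field_simps flip: distrib_left)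
qed

lemma cauchynet_approximable_Im_atom:
  assumes "nonreal_poles b"
  shows "cauchynet_approximable M (\<lambda>x. complex_of_real (Im (cauchy_atom b x)))"
proof -
  have "cauchynet_approximable M
      (\<lambda>x. (1/(2*\<i>)) * cauchy_atom b x + (-1/(2*\<i>)) * cauchy_atom (\<lambda>i. cnj (b i)) x)"
    using assms by (intro cauchynet_approximable_add cauchynet_approximable_atom)
      (simp_all add: nonreal_poles_def)
  moreover have "(1/(2*\<i>)) * z + (-1/(2*\<i>)) * cnj z = complex_of_real (Im z)" for z
    using complex_diff_cnj[of z] by (simp add: field_simps)
  ultimately show ?thesis by (simp add: cauchy_atom_cnj)
qed

lemma cauchy_atoms_separate_points:
  fixes x y :: "real^'n::finite"
  assumes "x \<noteq> y"
  shows "\<exists>b. nonreal_poles b \<and> cauchy_atom b x \<noteq> cauchy_atom b y"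
proof (rule ccontr)
  obtain j where j: "x $ j \<noteq> y $ j" using assms by (auto simp: vec_eq_iff)
  define b where "b t = (\<lambda>i. if i = j then complex_of_real t + \<i> else \<i>)" for t :: real
  define A where "A z = (\<Prod>i\<in>UNIV - {j}. inverse (\<i> - complex_of_real (z $ i)))" for z :: "real^'n"
  have shifted_nonzero: "complex_of_real t + \<i> - complex_of_real r \<noteq> 0" for t r
    using nonreal_poles_diff_nonzero[of "\<lambda>_. complex_of_real t + \<i>"]
    by (simp add: nonreal_poles_def)
  have "A z \<noteq> 0" for z
    using shifted_nonzero[of 0] by (simp add: A_def)
  have atom_b: "cauchy_atom (b t) z = A z / (complex_of_real t + \<i> - complex_of_real (z $ j))"
    for t z
  proof -
    have "cauchy_atom (b t) z = inverse (b t j - complex_of_real (z $ j)) *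
        (\<Prod>i\<in>UNIV - {j}. inverse (b t i - complex_of_real (z $ i)))"
      unfolding cauchy_atom_def by (rule prod.remove) auto
    also have "(\<Prod>i\<in>UNIV - {j}. inverse (b t i - complex_of_real (z $ i))) = A z"
      unfolding A_def by (rule prod.cong) (auto simp: b_def)
    finally show ?thesis by (simp add: b_def divide_inverse mult.commute)
  qed
  \<comment> \<open>equality at t = 0 and t = 1 forces A x = A y and then x $ j = y $ j\<close>
  have "nonreal_poles (b t)" for t by (simp add: b_def nonreal_poles_def)
  moreover assume "\<not> ?thesis"
  ultimately have "cauchy_atom (b t) x = cauchy_atom (b t) y" for t by blast
  then have "A x * (complex_of_real t + \<i> - complex_of_real (y $ j))
      = A y * (complex_of_real t + \<i> - complex_of_real (x $ j))" for t
    using shifted_nonzero by (simp add: atom_b field_simps)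
  from this[of 0] this[of 1] have "A x = A y" and "A x * (\<i> - y $ j) = A x * (\<i> - x $ j)"
    by (simp_all add: algebra_simps)
  with \<open>A x \<noteq> 0\<close> j show False by simp
qed

lemma cauchynet_approximable_of_real_continuous:
  assumes M: "compact M" and f: "continuous_on M f"
  shows "cauchynet_approximable M (\<lambda>x. complex_of_real (f x))"
proof (rule cauchynet_approximable_uniform_limit)
  fix e :: real assume "e > 0"
  define P where "P r \<longleftrightarrow> continuous_on M r \<and> cauchynet_approximable M (\<lambda>x. complex_of_real (r x))"
    for r
  have bounded: "bounded ((\<lambda>x. complex_of_real (r x)) ` M)" if "P r" for r
    using that M by (intro compact_imp_bounded compact_continuous_image continuous_intros)
      (auto simp: P_def)
  have "\<exists>r. P r \<and> (\<forall>x\<in>M. \<bar>f x - r x\<bar> < e)"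
  proof (rule Stone_Weierstrass_HOL[OF M _ _ _ _ _ f \<open>e > 0\<close>])
    fix c :: real
    show "P (\<lambda>x. c)"
      using compact_imp_bounded[OF M] by (simp add: P_def cauchynet_approximable_const)
  next
    fix r assume "P r"
    then show "continuous_on M r" by (simp add: P_def)
  next
    fix r g assume "P r \<and> P g"
    then show "P (\<lambda>x. r x + g x)"
      by (auto simp: P_def intro: continuous_intros dest: cauchynet_approximable_add)
  next
    fix r g assume "P r \<and> P g"
    then show "P (\<lambda>x. r x * g x)"
      using bounded by (auto simp: P_def intro: continuous_intros cauchynet_approximable_mult)
  next
    fix x y assume "x \<in> M \<and> y \<in> M \<and> x \<noteq> y"
    then obtain b where b: "nonreal_poles b" "cauchy_atom b x \<noteq> cauchy_atom b y"
      using cauchy_atoms_separate_points by blast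
    have "P (\<lambda>z. Re (cauchy_atom b z))" "P (\<lambda>z. Im (cauchy_atom b z))"
      using b(1) continuous_on_cauchy_atom[OF b(1)]
      by (auto simp: P_def cauchynet_approximable_Re_atom cauchynet_approximable_Im_atom
          intro: continuous_intros)
    then show "\<exists>r. P r \<and> r x \<noteq> r y"
      using b(2) complex_eqI by metis
  qed
  then obtain r where "P r" and r: "\<forall>x\<in>M. \<bar>f x - r x\<bar> < e" by blast
  then show "\<exists>g'. cauchynet_approximable M g' \<and> (\<forall>x\<in>M. cmod (complex_of_real (f x) - g' x) < e)"
    by (intro exI[of _ "\<lambda>x. complex_of_real (r x)"]) (simp add: P_def flip: of_real_diff)
qed

theorem theorem3:
  fixes Mi :: "'n::finite \<Rightarrow> real set"
    and Ui :: "'n \<Rightarrow> complex set"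
    and M :: "(real^'n) set"
    and f :: "real^'n \<Rightarrow> real"
    and \<epsilon> :: real
  assumes M_def: "M = {x. \<forall>i. x $ i \<in> Mi i}"
    and M_compact: "compact M"
    and U_open: "\<And>i. open (Ui i)"
    and U_connected: "\<And>i. connected (Ui i)"
    and U_symm: "\<And>i z. z \<in> Ui i \<Longrightarrow> cnj z \<in> Ui i"
    and M_sub_U: "\<And>x i. x \<in> M \<Longrightarrow> complex_of_real (x $ i) \<in> Ui i"
    and f_cont: "continuous_on M f"
    and eps: "\<epsilon> > 0"
  shows "\<exists>h::nat. h \<ge> 1 \<and> (\<exists>(B :: nat \<Rightarrow> 'n \<Rightarrow> complex) (c :: nat \<Rightarrow> complex).
           cauchynet_admissible h B M \<and>
           (\<forall>x\<in>M. cmod (complex_of_real (f x) - cauchynet h B c x) < \<epsilon>))"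
proof -
  obtain h B c where poles: "\<forall>k<h. nonreal_poles (B k)"
    and approx: "\<forall>x\<in>M. cmod (complex_of_real (f x) - cauchynet h B c x) < \<epsilon>"
    using cauchynet_approximable_of_real_continuous[OF M_compact f_cont] eps
    unfolding cauchynet_approximable_def by blast
  define B' where "B' = B(h := (\<lambda>_. \<i>))"
  have "\<forall>k<Suc h. nonreal_poles (B' k)"
    using poles by (simp add: B'_def nonreal_poles_def less_Suc_eq)
  then have "cauchynet_admissible (Suc h) B' M"
    by (rule cauchynet_admissible_if_nonreal_poles)
  moreover have "cauchynet (Suc h) B' (c(h := 0)) x = cauchynet h B c x" for x
    unfolding B'_def by (rule cauchynet_extend_zero)
  ultimately show ?thesis
    using approx by (intro exI[of _ "Suc h"] exI[of _ B'] exI[of _ "c(h := 0)"] conjI) auto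
qed

end
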